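(* Let $T$ be a non-trivial tree. Then $\dim_{1,f}(T)=\dim_f(T)$ if and only if either $T\in\{P_2, P_3\}$, or $ex(T)\ge 1$ and $V(T)=M_2(T) \cup L(T)$.
   Context: $P_n$ is the path on $n$ vertices; $d(x,y)$ is the distance in the tree. For a function $g$ on $V(T)$ and $U\subseteq V(T)$, $g(U)=\sum_{s\in U}g(s)$. $R\{x,y\}=\{z: d(x,z)\ne d(y,z)\}$; $g:V(T)\to[0,1]$ is a resolving function if $g(R\{x,y\})\ge1$ for all distinct $x,y$; $\dim_f(T)$ is the minimum of $g(V(T))$ over resolving functions. $d_1(x,y)=\min\{d(x,y),2\}$, $R_1\{x,y\}=\{z: d_1(x,z)\neq d_1(y,z)\}$; $h:V(T)\to[0,1]$ is a $1$-truncated resolving function if $h(R_1\{x,y\})\ge 1$ for all distinct $x,y$, and $\dim_{1,f}(T)$ is the minimum of $h(V(T))$ over such $h$. $L(T)$ is the set of leaves (degree-one vertices); a major vertex has degree at least three. A leaf $\ell$ is a terminal vertex of a major vertex $v$ if $d(\ell,v)<d(\ell,w)$ for every other major vertex $w$; $ter(v)$ is the number of terminal vertices of $v$; an exterior major vertex is a major vertex with $ter(v)>0$. $M(T)$ is the set of exterior major vertices, $ex(T)=|M(T)|$, $M_2(T)=\{w\in M(T): ter(w)\ge2\}$. *)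

theory Defs
  imports Complex_Main
begin

definition walk :: "('a \<Rightarrow> 'a \<Rightarrow> bool) \<Rightarrow> 'a list \<Rightarrow> bool" where
  "walk E xs \<longleftrightarrow> (\<forall>i. Suc i < length xs \<longrightarrow> E (xs ! i) (xs ! Suc i))"

definition connected_graph :: "'a set \<Rightarrow> ('a \<Rightarrow> 'a \<Rightarrow> bool) \<Rightarrow> bool" where
  "connected_graph V E \<longleftrightarrow> (\<forall>x\<in>V. \<forall>y\<in>V. \<exists>xs. xs \<noteq> [] \<and> hd xs = x \<and> last xs = y
      \<and> set xs \<subseteq> V \<and> walk E xs)"

definition acyclic_graph :: "'a set \<Rightarrow> ('a \<Rightarrow> 'a \<Rightarrow> bool) \<Rightarrow> bool" where
  "acyclic_graph V E \<longleftrightarrow> \<not> (\<exists>xs. length xs \<ge> 3 \<and> distinct xs \<and> set xs \<subseteq> V \<and> walk E xs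
      \<and> E (last xs) (hd xs))"

definition is_tree :: "'a set \<Rightarrow> ('a \<Rightarrow> 'a \<Rightarrow> bool) \<Rightarrow> bool" where
  "is_tree V E \<longleftrightarrow> finite V \<and> V \<noteq> {} \<and> (\<forall>x y. E x y \<longrightarrow> x \<in> V \<and> y \<in> V)
     \<and> (\<forall>x y. E x y \<longrightarrow> E y x) \<and> (\<forall>x. \<not> E x x)
     \<and> connected_graph V E \<and> acyclic_graph V E"

definition gdist :: "'a set \<Rightarrow> ('a \<Rightarrow> 'a \<Rightarrow> bool) \<Rightarrow> 'a \<Rightarrow> 'a \<Rightarrow> nat" where
  "gdist V E x y = (LEAST n. \<exists>xs. xs \<noteq> [] \<and> hd xs = x \<and> last xs = y \<and> set xs \<subseteq> V
      \<and> walk E xs \<and> length xs = Suc n)"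

definition gdist1 :: "'a set \<Rightarrow> ('a \<Rightarrow> 'a \<Rightarrow> bool) \<Rightarrow> 'a \<Rightarrow> 'a \<Rightarrow> nat" where
  "gdist1 V E x y = min (gdist V E x y) 2"

definition resolving_set :: "'a set \<Rightarrow> ('a \<Rightarrow> 'a \<Rightarrow> bool) \<Rightarrow> 'a \<Rightarrow> 'a \<Rightarrow> 'a set" where
  "resolving_set V E x y = {z \<in> V. gdist V E x z \<noteq> gdist V E y z}"

definition resolving_set1 :: "'a set \<Rightarrow> ('a \<Rightarrow> 'a \<Rightarrow> bool) \<Rightarrow> 'a \<Rightarrow> 'a \<Rightarrow> 'a set" where
  "resolving_set1 V E x y = {z \<in> V. gdist1 V E x z \<noteq> gdist1 V E y z}"

definition resolving_function :: "'a set \<Rightarrow> ('a \<Rightarrow> 'a \<Rightarrow> bool) \<Rightarrow> ('a \<Rightarrow> real) \<Rightarrow> bool" where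
  "resolving_function V E g \<longleftrightarrow> (\<forall>v\<in>V. 0 \<le> g v \<and> g v \<le> 1)
     \<and> (\<forall>x\<in>V. \<forall>y\<in>V. x \<noteq> y \<longrightarrow> sum g (resolving_set V E x y) \<ge> 1)"

definition trunc_resolving_function :: "'a set \<Rightarrow> ('a \<Rightarrow> 'a \<Rightarrow> bool) \<Rightarrow> ('a \<Rightarrow> real) \<Rightarrow> bool" where
  "trunc_resolving_function V E h \<longleftrightarrow> (\<forall>v\<in>V. 0 \<le> h v \<and> h v \<le> 1)
     \<and> (\<forall>x\<in>V. \<forall>y\<in>V. x \<noteq> y \<longrightarrow> sum h (resolving_set1 V E x y) \<ge> 1)"

text \<open>The minimum is attained (finite LP); we write it as an infimum.\<close>
definition frac_dim :: "'a set \<Rightarrow> ('a \<Rightarrow> 'a \<Rightarrow> bool) \<Rightarrow> real" where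
  "frac_dim V E = Inf {sum g V | g. resolving_function V E g}"

definition frac_dim1 :: "'a set \<Rightarrow> ('a \<Rightarrow> 'a \<Rightarrow> bool) \<Rightarrow> real" where
  "frac_dim1 V E = Inf {sum h V | h. trunc_resolving_function V E h}"

definition degree :: "'a set \<Rightarrow> ('a \<Rightarrow> 'a \<Rightarrow> bool) \<Rightarrow> 'a \<Rightarrow> nat" where
  "degree V E v = card {w \<in> V. E v w}"

definition leaves :: "'a set \<Rightarrow> ('a \<Rightarrow> 'a \<Rightarrow> bool) \<Rightarrow> 'a set" where
  "leaves V E = {v \<in> V. degree V E v = 1}"

definition major :: "'a set \<Rightarrow> ('a \<Rightarrow> 'a \<Rightarrow> bool) \<Rightarrow> 'a \<Rightarrow> bool" where
  "major V E v \<longleftrightarrow> v \<in> V \<and> degree V E v \<ge> 3"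

definition terminal_vertices :: "'a set \<Rightarrow> ('a \<Rightarrow> 'a \<Rightarrow> bool) \<Rightarrow> 'a \<Rightarrow> 'a set" where
  "terminal_vertices V E v = {l \<in> leaves V E. \<forall>w. major V E w \<and> w \<noteq> v \<longrightarrow> gdist V E l v < gdist V E l w}"

definition ter :: "'a set \<Rightarrow> ('a \<Rightarrow> 'a \<Rightarrow> bool) \<Rightarrow> 'a \<Rightarrow> nat" where
  "ter V E v = card (terminal_vertices V E v)"

definition exterior_major :: "'a set \<Rightarrow> ('a \<Rightarrow> 'a \<Rightarrow> bool) \<Rightarrow> 'a set" where
  "exterior_major V E = {v. major V E v \<and> ter V E v > 0}"

definition ex_num :: "'a set \<Rightarrow> ('a \<Rightarrow> 'a \<Rightarrow> bool) \<Rightarrow> nat" where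
  "ex_num V E = card (exterior_major V E)"

definition M2 :: "'a set \<Rightarrow> ('a \<Rightarrow> 'a \<Rightarrow> bool) \<Rightarrow> 'a set" where
  "M2 V E = {w \<in> exterior_major V E. ter V E w \<ge> 2}"

definition is_path_graph :: "'a set \<Rightarrow> ('a \<Rightarrow> 'a \<Rightarrow> bool) \<Rightarrow> nat \<Rightarrow> bool" where
  "is_path_graph V E n \<longleftrightarrow> (\<exists>f. bij_betw f {0..<n} V \<and>
     (\<forall>i<n. \<forall>j<n. E (f i) (f j) \<longleftrightarrow> (i = Suc j \<or> j = Suc i)))"

end

theory Submission
  imports Defs
begin

(*
  Call a tree strongly supported if every internal vertex is adjacent to at least two leaves.
  Weighting every leaf by 1/2 resolves any tree, since two vertices are always separated by a
  leaf on either side; hence dim_f(T) <= |L|/2. In a strongly supported tree this weighting is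
  even 1-truncated resolving, while twin leaves (leaves with a common neighbour) are resolved
  only by themselves, forcing dim_f(T) >= |L|/2; so both dimensions equal |L|/2.
  Otherwise every 1-truncated resolving function has weight at least |L|/2 + 1/6: split V into
  the leaves with twins, the pendant edges of the remaining (lone) leaves and the other internal
  vertices, and bound each part separately; the surplus comes from an internal vertex without
  leaf neighbours or from a vertex of small degree in the forest spanned by the supports of lone
  leaves. Finally, among trees with at least two vertices the strongly supported ones are
  exactly P_2, P_3 and the trees whose internal vertices all lie in M_2.
*)

section \<open>Walks\<close>

lemma walk_Nil [simp]: "walk E []"
  by (simp add: walk_def)

lemma walk_single [simp]: "walk E [x]"
  by (simp add: walk_def)

lemma walk_Cons_Cons [simp]: "walk E (x # y # xs) \<longleftrightarrow> E x y \<and> walk E (y # xs)"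
  unfolding walk_def
proof (intro iffI conjI allI impI)
  fix i assume "E x y \<and> (\<forall>i. Suc i < length (y # xs) \<longrightarrow> E ((y # xs) ! i) ((y # xs) ! Suc i))"
    and "Suc i < length (x # y # xs)"
  then show "E ((x # y # xs) ! i) ((x # y # xs) ! Suc i)" by (cases i) auto
qed (fastforce, metis Suc_less_eq length_Cons nth_Cons_Suc)

lemma walk_Cons: "walk E (x # xs) \<longleftrightarrow> walk E xs \<and> (xs \<noteq> [] \<longrightarrow> E x (hd xs))"
  by (cases xs) auto

lemma walk_append:
  "walk E (xs @ ys) \<longleftrightarrow> walk E xs \<and> walk E ys \<and> (xs \<noteq> [] \<and> ys \<noteq> [] \<longrightarrow> E (last xs) (hd ys))"
  by (induction xs) (auto simp: walk_Cons)

lemma walk_rev: "(\<And>x y. E x y \<Longrightarrow> E y x) \<Longrightarrow> walk E xs \<Longrightarrow> walk E (rev xs)"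
  by (induction xs) (auto simp: walk_Cons walk_append hd_rev last_rev)

lemma walk_drop: "walk E xs \<Longrightarrow> walk E (drop i xs)"
  unfolding walk_def by auto

lemma walk_take: "walk E xs \<Longrightarrow> walk E (take i xs)"
  unfolding walk_def by auto

lemma walk_nth: "walk E xs \<Longrightarrow> Suc i < length xs \<Longrightarrow> E (xs ! i) (xs ! Suc i)"
  unfolding walk_def by auto

definition non_backtracking :: "'a list \<Rightarrow> bool" where
  "non_backtracking xs \<longleftrightarrow> (\<forall>i. Suc (Suc i) < length xs \<longrightarrow> xs ! i \<noteq> xs ! Suc (Suc i))"

lemma distinct_imp_non_backtracking: "distinct xs \<Longrightarrow> non_backtracking xs"
  unfolding non_backtracking_def by (simp add: nth_eq_iff_index_eq)

lemma non_backtracking_appendD: "non_backtracking (xs @ ys) \<Longrightarrow> non_backtracking xs"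
  unfolding non_backtracking_def
proof (intro allI impI)
  fix i assume "\<forall>i. Suc (Suc i) < length (xs @ ys) \<longrightarrow> (xs @ ys) ! i \<noteq> (xs @ ys) ! Suc (Suc i)"
    and "Suc (Suc i) < length xs"
  then show "xs ! i \<noteq> xs ! Suc (Suc i)" by (auto simp: nth_append dest: spec[of _ i])
qed

lemma non_backtracking_append:
  assumes "non_backtracking xs" "non_backtracking ys"
    and "2 \<le> length xs \<Longrightarrow> ys \<noteq> [] \<Longrightarrow> xs ! (length xs - 2) \<noteq> hd ys"
    and "xs \<noteq> [] \<Longrightarrow> 2 \<le> length ys \<Longrightarrow> last xs \<noteq> ys ! 1"
  shows "non_backtracking (xs @ ys)"
  unfolding non_backtracking_def
proof (intro allI impI)
  fix i assume i: "Suc (Suc i) < length (xs @ ys)"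
  consider "Suc (Suc i) < length xs" | "length xs \<le> i"
    | "Suc (Suc i) = length xs" | "Suc i = length xs"
    by linarith
  then show "(xs @ ys) ! i \<noteq> (xs @ ys) ! Suc (Suc i)"
  proof cases
    case 1
    then show ?thesis using assms(1) by (simp add: nth_append non_backtracking_def)
  next
    case 2
    then have "Suc (Suc i) - length xs = Suc (Suc (i - length xs))" by simp
    then show ?thesis using 2 i assms(2) by (simp add: nth_append non_backtracking_def)
  next
    case 3
    then show ?thesis using assms(3) i 3[symmetric] by (simp add: nth_append hd_conv_nth)
  next
    case 4
    then have "xs \<noteq> []" by auto
    then show ?thesis using assms(4) i 4[symmetric] by (simp add: nth_append last_conv_nth)
  qed
qed

section \<open>Distances in a tree\<close>

locale tree =
  fixes V :: "'a set" and E :: "'a \<Rightarrow> 'a \<Rightarrow> bool"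
  assumes is_tree: "is_tree V E"
begin

abbreviation "L \<equiv> leaves V E"

lemma finite_V: "finite V"
  using is_tree by (simp add: is_tree_def)

lemma adjacent_in_V: "E x y \<Longrightarrow> x \<in> V \<and> y \<in> V"
  using is_tree by (simp add: is_tree_def)

lemma adjacent_sym: "E x y \<Longrightarrow> E y x"
  using is_tree by (simp add: is_tree_def)

lemma not_adjacent_self [simp]: "\<not> E x x"
  using is_tree by (simp add: is_tree_def)

lemma is_connected: "connected_graph V E"
  using is_tree by (simp add: is_tree_def)

lemma is_acyclic: "acyclic_graph V E"
  using is_tree by (simp add: is_tree_def)

lemma leaves_subset_V: "L \<subseteq> V"
  by (auto simp: leaves_def)

lemma finite_leaves: "finite L"
  using finite_V by (simp add: leaves_def)

definition walk_betw :: "'a \<Rightarrow> 'a \<Rightarrow> 'a list \<Rightarrow> bool" where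
  "walk_betw x y xs \<longleftrightarrow> xs \<noteq> [] \<and> hd xs = x \<and> last xs = y \<and> set xs \<subseteq> V \<and> walk E xs"

lemma walk_betw_exists: "x \<in> V \<Longrightarrow> y \<in> V \<Longrightarrow> \<exists>xs. walk_betw x y xs"
  using is_connected unfolding connected_graph_def walk_betw_def by blast

lemma walk_betw_rev: "walk_betw x y xs \<Longrightarrow> walk_betw y x (rev xs)"
  unfolding walk_betw_def by (auto simp: hd_rev last_rev intro: walk_rev adjacent_sym)

lemma walk_betw_append: "walk_betw x y xs \<Longrightarrow> walk_betw y z ys \<Longrightarrow> walk_betw x z (xs @ tl ys)"
  unfolding walk_betw_def by (cases ys) (auto simp: walk_append walk_Cons)

lemma gdist_eq_Least: "gdist V E x y = (LEAST n. \<exists>xs. walk_betw x y xs \<and> length xs = Suc n)"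
  unfolding gdist_def walk_betw_def by simp

lemma gdist_le_walk: "walk_betw x y xs \<Longrightarrow> gdist V E x y \<le> length xs - 1"
  unfolding gdist_eq_Least by (rule Least_le) (auto simp: walk_betw_def)

lemma shortest_walk:
  assumes "x \<in> V" "y \<in> V"
  obtains xs where "walk_betw x y xs" "length xs = Suc (gdist V E x y)"
proof -
  obtain xs where "walk_betw x y xs" using walk_betw_exists assms by blast
  then have "walk_betw x y xs \<and> length xs = Suc (length xs - 1)"
    by (cases xs) (auto simp: walk_betw_def)
  then have "\<exists>n xs. walk_betw x y xs \<and> length xs = Suc n" by blast
  then have "\<exists>xs. walk_betw x y xs \<and> length xs = Suc (gdist V E x y)"
    unfolding gdist_eq_Least by (rule LeastI_ex)
  with that show ?thesis by blast
qed

lemma gdist_sym: "gdist V E x y = gdist V E y x"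
proof -
  have le: "gdist V E y x \<le> gdist V E x y" if xy: "x \<in> V" "y \<in> V" for x y
  proof -
    obtain xs where "walk_betw x y xs" "length xs = Suc (gdist V E x y)"
      using shortest_walk[OF xy] by blast
    then show ?thesis using gdist_le_walk[OF walk_betw_rev] by fastforce
  qed
  show ?thesis
  proof (cases "x \<in> V \<and> y \<in> V")
    case True
    then show ?thesis using le by (meson le_antisym)
  next
    case False
    then have "\<not> walk_betw x y xs" "\<not> walk_betw y x xs" for xs
      unfolding walk_betw_def by (metis hd_in_set last_in_set subsetD)+
    then show ?thesis unfolding gdist_eq_Least by metis
  qed
qed

lemma gdist_triangle:
  assumes "x \<in> V" "y \<in> V" "z \<in> V"
  shows "gdist V E x z \<le> gdist V E x y + gdist V E y z"
proof -
  obtain xs where xs: "walk_betw x y xs" "length xs = Suc (gdist V E x y)"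
    using shortest_walk assms by blast
  obtain ys where ys: "walk_betw y z ys" "length ys = Suc (gdist V E y z)"
    using shortest_walk assms by blast
  show ?thesis using gdist_le_walk[OF walk_betw_append[OF xs(1) ys(1)]] xs ys by simp
qed

lemma gdist_self [simp]: "x \<in> V \<Longrightarrow> gdist V E x x = 0"
  using gdist_le_walk[of x x "[x]"] by (simp add: walk_betw_def)

lemma gdist_eq_0_iff:
  assumes "x \<in> V" "y \<in> V"
  shows "gdist V E x y = 0 \<longleftrightarrow> x = y"
proof
  assume "gdist V E x y = 0"
  moreover obtain xs where "walk_betw x y xs" "length xs = Suc (gdist V E x y)"
    using shortest_walk[OF assms] by blast
  ultimately show "x = y" by (cases xs) (auto simp: walk_betw_def)
qed (use assms in simp)

lemma gdist_eq_1_iff: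
  assumes "x \<in> V" "y \<in> V"
  shows "gdist V E x y = 1 \<longleftrightarrow> E x y"
proof
  assume "gdist V E x y = 1"
  moreover obtain xs where "walk_betw x y xs" "length xs = Suc (gdist V E x y)"
    using shortest_walk[OF assms] by blast
  ultimately show "E x y" by (cases xs; cases "tl xs") (auto simp: walk_betw_def)
next
  assume "E x y"
  then have "gdist V E x y \<le> 1"
    using gdist_le_walk[of x y "[x, y]"] adjacent_in_V by (simp add: walk_betw_def)
  moreover have "x \<noteq> y" using \<open>E x y\<close> by auto
  ultimately show "gdist V E x y = 1" using gdist_eq_0_iff assms by fastforce
qed

lemma gdist1_eq:
  assumes "x \<in> V" "z \<in> V"
  shows "gdist1 V E x z = (if z = x then 0 else if E x z then 1 else 2)"
  using gdist_eq_0_iff[OF assms] gdist_eq_1_iff[OF assms] unfolding gdist1_def by auto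

lemma resolving_set1_eq:
  assumes "x \<in> V" "y \<in> V" "x \<noteq> y"
  shows "resolving_set1 V E x y = {x, y} \<union> {z \<in> V. E x z \<noteq> E y z}"
  unfolding resolving_set1_def using assms by (auto simp: gdist1_eq split: if_splits)

lemma resolving_set1_subset_resolving_set: "resolving_set1 V E x y \<subseteq> resolving_set V E x y"
  unfolding resolving_set1_def resolving_set_def gdist1_def by auto

lemma non_backtracking_walk_distinct:
  assumes "walk E xs" "set xs \<subseteq> V" "non_backtracking xs"
  shows "distinct xs"
  using assms
proof (induction xs rule: rev_induct)
  case (snoc y xs)
  have walk: "walk E xs" and adj: "xs \<noteq> [] \<Longrightarrow> E (last xs) y"
    using snoc.prems(1) by (simp_all add: walk_append)
  have "distinct xs"
    using snoc.IH[OF walk _ non_backtracking_appendD[OF snoc.prems(3)]] snoc.prems(2) by simp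
  moreover have "y \<notin> set xs"
  proof
    assume "y \<in> set xs"
    then obtain i where i: "i < length xs" "xs ! i = y" by (auto simp: in_set_conv_nth)
    then have "xs \<noteq> []" by auto
    then have last_adj: "E (last xs) y" by (rule adj)
    consider "Suc i = length xs" | "Suc (Suc i) = length xs" | "Suc (Suc (Suc i)) \<le> length xs"
      using i(1) by linarith
    then show False
    proof cases
      case 1
      then show False using last_adj i \<open>xs \<noteq> []\<close> 1[symmetric] by (simp add: last_conv_nth)
    next
      case 2
      then show False using snoc.prems(3) i 2[symmetric]
        by (auto simp: non_backtracking_def nth_append dest: spec[of _ i])
    next
      case 3
      let ?c = "drop i xs"
      have "distinct ?c" "set ?c \<subseteq> V" "walk E ?c" "3 \<le> length ?c"
        using \<open>distinct xs\<close> snoc.prems(2) walk_drop[OF walk] 3 by (auto dest: in_set_dropD)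
      moreover have "E (last ?c) (hd ?c)"
        using last_adj i by (simp add: hd_drop_conv_nth)
      ultimately show False using is_acyclic unfolding acyclic_graph_def by blast
    qed
  qed
  ultimately show ?case by simp
qed simp

lemma shortest_walk_gdist_nth:
  assumes P: "walk_betw x t P" "length P = Suc (gdist V E x t)" and i: "i < length P"
  shows "gdist V E (P ! i) t = gdist V E x t - i"
proof -
  have V: "x \<in> V" "t \<in> V" "P ! i \<in> V"
    using P i by (auto simp: walk_betw_def)
  have "walk_betw (P ! i) t (drop i P)"
    using P i by (auto simp: walk_betw_def hd_drop_conv_nth walk_drop dest: in_set_dropD)
  then have "gdist V E (P ! i) t \<le> gdist V E x t - i"
    using gdist_le_walk P(2) by fastforce
  moreover have "last (take (Suc i) P) = P ! i"
    using i by (simp add: take_Suc_conv_app_nth)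
  then have "walk_betw x (P ! i) (take (Suc i) P)"
    using P i by (auto simp: walk_betw_def hd_take walk_take dest: in_set_takeD)
  then have "gdist V E x (P ! i) \<le> i"
    using gdist_le_walk i by fastforce
  ultimately show ?thesis using gdist_triangle[OF V(1,3,2)] by linarith
qed

lemma shortest_walk_distinct:
  assumes "walk_betw x t P" "length P = Suc (gdist V E x t)"
  shows "distinct P"
  unfolding distinct_conv_nth
proof (intro allI impI)
  fix i j assume "i < length P" "j < length P" "i \<noteq> j"
  then show "P ! i \<noteq> P ! j"
    using shortest_walk_gdist_nth[OF assms, of i] shortest_walk_gdist_nth[OF assms, of j] assms(2)
    by auto
qed

text \<open>Otherwise the shortest walks from the two neighbours to t, joined through z,
  would contain a cycle.\<close>
lemma neighbour_farther:
  assumes "t \<in> V" "z \<in> V" "E z u1" "E z u2" "u1 \<noteq> u2"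
    and closer: "gdist V E u1 t < gdist V E z t"
  shows "gdist V E z t < gdist V E u2 t"
proof (rule ccontr)
  assume not_farther: "\<not> gdist V E z t < gdist V E u2 t"
  have V: "u1 \<in> V" "u2 \<in> V" using assms adjacent_in_V by auto
  obtain P1 where P1: "walk_betw u1 t P1" "length P1 = Suc (gdist V E u1 t)"
    using shortest_walk V assms(1) by blast
  obtain P2 where P2: "walk_betw u2 t P2" "length P2 = Suc (gdist V E u2 t)"
    using shortest_walk V assms(1) by blast
  have "z \<notin> set P2"
  proof
    assume "z \<in> set P2"
    then obtain i where i: "i < length P2" "P2 ! i = z" by (auto simp: in_set_conv_nth)
    have "P2 ! 0 = u2" using P2 by (auto simp: walk_betw_def hd_conv_nth)
    then have "i \<noteq> 0" using i assms(4) by (metis not_adjacent_self)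
    with i show False using shortest_walk_gdist_nth[OF P2] not_farther P2(2) by fastforce
  qed
  let ?W = "rev P1 @ z # P2"
  have "non_backtracking ?W"
  proof (rule non_backtracking_append)
    show "non_backtracking (rev P1)" "non_backtracking (z # P2)"
      using shortest_walk_distinct[OF P1] shortest_walk_distinct[OF P2] \<open>z \<notin> set P2\<close>
      by (simp_all add: distinct_imp_non_backtracking)
  next
    assume "2 \<le> length (rev P1)"
    then have "rev P1 ! (length (rev P1) - 2) = P1 ! 1" "1 < length P1" by (simp_all add: rev_nth)
    then show "rev P1 ! (length (rev P1) - 2) \<noteq> hd (z # P2)"
      using shortest_walk_gdist_nth[OF P1] closer by fastforce
  next
    show "last (rev P1) \<noteq> (z # P2) ! 1"
      using P1 P2 assms(5) by (auto simp: walk_betw_def last_rev hd_conv_nth)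
  qed
  moreover have "walk E ?W" "set ?W \<subseteq> V"
    using P1 P2 assms(2-4) adjacent_sym
    by (auto simp: walk_betw_def walk_append walk_Cons last_rev intro: walk_rev)
  ultimately have "distinct ?W" by (rule non_backtracking_walk_distinct[rotated 2])
  moreover have "t \<in> set P1" "t \<in> set P2" using P1 P2 unfolding walk_betw_def by (metis last_in_set)+
  ultimately show False by auto
qed

lemma closer_neighbour:
  assumes "t \<in> V" "z \<in> V" "z \<noteq> t"
  obtains d where "E z d" "gdist V E d t < gdist V E z t"
    "\<And>u. E z u \<Longrightarrow> u \<noteq> d \<Longrightarrow> gdist V E u t = Suc (gdist V E z t)"
proof -
  obtain P where P: "walk_betw z t P" "length P = Suc (gdist V E z t)"
    using shortest_walk assms by blast
  have "gdist V E z t \<noteq> 0" using gdist_eq_0_iff assms by blast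
  then have len: "1 < length P" using P by simp
  then have adj: "E z (P ! 1)"
    using P walk_nth[of E P 0] by (auto simp: walk_betw_def hd_conv_nth)
  have closer: "gdist V E (P ! 1) t < gdist V E z t"
    using shortest_walk_gdist_nth[OF P len] \<open>gdist V E z t \<noteq> 0\<close> by simp
  have "gdist V E u t = Suc (gdist V E z t)" if "E z u" "u \<noteq> P ! 1" for u
  proof -
    have "u \<in> V" "gdist V E u z = 1"
      using that adjacent_in_V gdist_eq_1_iff adjacent_sym by (auto simp del: One_nat_def)
    then have "gdist V E u t \<le> Suc (gdist V E z t)" using gdist_triangle assms by fastforce
    moreover have "gdist V E z t < gdist V E u t"
      using neighbour_farther[OF assms(1,2) adj that(1)] that(2) closer by auto
    ultimately show ?thesis by simp
  qed
  then show ?thesis using that adj closer by blast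
qed

text \<open>A vertex farthest from y among those whose shortest path to y passes through x
  is a leaf.\<close>
lemma leaf_closer:
  assumes x: "x \<in> V" and y: "y \<in> V" and "x \<noteq> y"
  obtains l where "l \<in> L" "gdist V E l x < gdist V E l y"
proof -
  define A where "A = {z \<in> V. gdist V E z y = gdist V E z x + gdist V E x y}"
  have "finite A" "x \<in> A" using finite_V x by (simp_all add: A_def)
  then have "Max ((\<lambda>u. gdist V E u y) ` A) \<in> (\<lambda>u. gdist V E u y) ` A"
    by (intro Max_in) auto
  then obtain z where zA: "z \<in> A" and "gdist V E z y = Max ((\<lambda>u. gdist V E u y) ` A)"
    by auto
  then have zmax: "\<And>u. u \<in> A \<Longrightarrow> gdist V E u y \<le> gdist V E z y"
    using \<open>finite A\<close> by simp
  have xy: "0 < gdist V E x y" using gdist_eq_0_iff x y \<open>x \<noteq> y\<close> by auto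
  have z: "z \<in> V" "z \<noteq> y" using zA xy y by (auto simp: A_def)
  obtain d where d: "E z d" "\<And>u. E z u \<Longrightarrow> u \<noteq> d \<Longrightarrow> gdist V E u y = Suc (gdist V E z y)"
    using closer_neighbour[OF y z] by blast
  have "u = d" if "E z u" for u
  proof (rule ccontr)
    assume "u \<noteq> d"
    have u: "u \<in> V" "gdist V E u z = 1"
      using that adjacent_in_V gdist_eq_1_iff adjacent_sym by (auto simp del: One_nat_def)
    have "gdist V E u x \<le> Suc (gdist V E z x)" using gdist_triangle[OF u(1) z(1) x] u by simp
    moreover have "gdist V E u y \<le> gdist V E u x + gdist V E x y" using gdist_triangle u x y by blast
    moreover have "gdist V E u y = Suc (gdist V E z y)" using d(2) that \<open>u \<noteq> d\<close> by blast
    ultimately have "u \<in> A" using zA u by (auto simp: A_def)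
    then show False using zmax \<open>gdist V E u y = Suc (gdist V E z y)\<close> by fastforce
  qed
  then have "{w \<in> V. E z w} = {d}" using d(1) adjacent_in_V by blast
  then have "z \<in> L" using z by (simp add: leaves_def degree_def)
  moreover have "gdist V E z x < gdist V E z y" using zA xy by (simp add: A_def)
  ultimately show ?thesis using that by blast
qed

section \<open>Leaves and their supports\<close>

lemma closed_subset_eq_V:
  assumes "C \<subseteq> V" "c \<in> C" and closed: "\<And>x y. x \<in> C \<Longrightarrow> E x y \<Longrightarrow> y \<in> C"
  shows "C = V"
proof (intro equalityI subsetI)
  fix v assume "v \<in> V"
  then obtain xs where xs: "walk_betw c v xs" using walk_betw_exists assms by blast
  have "xs ! i \<in> C" if "i < length xs" for i
    using that
  proof (induction i)
    case 0
    then show ?case using xs assms(2) by (auto simp: walk_betw_def hd_conv_nth)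
  next
    case (Suc i)
    then have "E (xs ! i) (xs ! Suc i)" using xs by (auto simp: walk_betw_def walk_nth)
    then show ?case using Suc closed by simp
  qed
  then show "v \<in> C" using xs by (auto simp: walk_betw_def last_conv_nth)
qed (use assms in auto)

lemma leaf_unique_neighbour:
  assumes "l \<in> L"
  shows "\<exists>!w. E l w"
proof -
  have "card {w \<in> V. E l w} = 1" using assms by (simp add: leaves_def degree_def)
  then obtain w where w: "{w \<in> V. E l w} = {w}" by (rule card_1_singletonE)
  then have "E l w" by blast
  moreover have "w' = w" if "E l w'" for w'
    using that w adjacent_in_V[of l w'] by blast
  ultimately show ?thesis by blast
qed

text \<open>Meaningful for leaves only: elsewhere the neighbour chosen by THE is unspecified.\<close>
definition support :: "'a \<Rightarrow> 'a" where
  "support l = (THE w. E l w)"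

lemma leaf_adjacent_iff:
  assumes "l \<in> L"
  shows "E l w \<longleftrightarrow> w = support l"
proof -
  have "E l (support l)"
    unfolding support_def using leaf_unique_neighbour[OF assms] by (rule theI')
  then show ?thesis using leaf_unique_neighbour[OF assms] by blast
qed

lemma adjacent_leaf_iff: "l \<in> L \<Longrightarrow> E w l \<longleftrightarrow> w = support l"
  using leaf_adjacent_iff[of l w] adjacent_sym by blast

lemma support_in_V: "l \<in> L \<Longrightarrow> support l \<in> V"
  using leaf_adjacent_iff[of l "support l"] adjacent_in_V by blast

lemma support_neq: "l \<in> L \<Longrightarrow> support l \<noteq> l"
  using leaf_adjacent_iff[of l l] by auto

lemma leaf_support_leaf:
  assumes "l \<in> L" "support l \<in> L"
  shows "V = {l, support l}"
proof -
  have "support (support l) = l"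
    using leaf_adjacent_iff[OF assms(1)] adjacent_leaf_iff[OF assms(2), of l] by simp
  have "{l, support l} = V"
  proof (rule closed_subset_eq_V)
    fix x y assume "x \<in> {l, support l}" "E x y"
    then show "y \<in> {l, support l}"
      using assms leaf_adjacent_iff \<open>support (support l) = l\<close> by auto
  qed (use assms leaves_subset_V support_in_V in auto)
  then show ?thesis by simp
qed

lemma support_not_leaf:
  assumes "3 \<le> card V" "l \<in> L"
  shows "support l \<notin> L"
proof
  assume "support l \<in> L"
  then have "V = {l, support l}" using leaf_support_leaf assms(2) by blast
  then have "card V \<le> 2" by (simp add: card_insert_if)
  then show False using assms(1) by simp
qed

lemma gdist_leaf:
  assumes "l \<in> L" "z \<in> V" "z \<noteq> l"
  shows "gdist V E l z = Suc (gdist V E (support l) z)"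
proof -
  have l: "l \<in> V" "support l \<in> V" using assms(1) leaves_subset_V support_in_V by auto
  obtain d where "E l d" "gdist V E d z < gdist V E l z"
    using closer_neighbour[OF assms(2) l(1)] assms(3) by blast
  then have "gdist V E (support l) z < gdist V E l z" by (simp add: leaf_adjacent_iff[OF assms(1)])
  moreover have "gdist V E l (support l) = 1"
    using gdist_eq_1_iff l leaf_adjacent_iff assms(1) by blast
  then have "gdist V E l z \<le> Suc (gdist V E (support l) z)"
    using gdist_triangle[OF l assms(2)] by simp
  ultimately show ?thesis by simp
qed

lemma resolving_set_twin_leaves:
  assumes "l \<in> L" "l' \<in> L" "support l = support l'"
  shows "resolving_set V E l l' \<subseteq> {l, l'}"
proof
  fix z assume z: "z \<in> resolving_set V E l l'"
  show "z \<in> {l, l'}"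
  proof (rule ccontr)
    assume "z \<notin> {l, l'}"
    then have "gdist V E l z = gdist V E l' z" using z assms gdist_leaf by (simp add: resolving_set_def)
    then show False using z by (simp add: resolving_set_def)
  qed
qed

lemma resolving_set1_leaf:
  assumes "l \<in> L" "y \<in> V" "y \<noteq> l"
  shows "resolving_set1 V E l y = {l, y} \<union> {z \<in> V. (z = support l) \<noteq> E y z}"
  using resolving_set1_eq[of l y] assms leaves_subset_V leaf_adjacent_iff by auto

definition leaf_nbrs :: "'a \<Rightarrow> 'a set" where
  "leaf_nbrs w = {l \<in> L. E w l}"

lemma leaf_nbrs_eq: "leaf_nbrs w = {l \<in> L. support l = w}"
  using adjacent_leaf_iff by (auto simp: leaf_nbrs_def)

lemma finite_leaf_nbrs: "finite (leaf_nbrs w)"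
  using finite_leaves by (simp add: leaf_nbrs_def)

lemma leaf_nbrs_subset_resolving_set1:
  assumes "x \<in> V" "y \<in> V" "x \<noteq> y"
  shows "leaf_nbrs x \<subseteq> resolving_set1 V E x y"
  using assms leaves_subset_V adjacent_leaf_iff by (auto simp: resolving_set1_eq leaf_nbrs_def)

end

section \<open>Weights that sum to at least one on every pair\<close>

lemma sum_ge_of_pairwise_ge_1:
  fixes c :: "'b \<Rightarrow> real"
  assumes "finite G" "x \<in> G" and pw: "\<And>y z. y \<in> G \<Longrightarrow> z \<in> G \<Longrightarrow> y \<noteq> z \<Longrightarrow> 1 \<le> c y + c z"
  shows "c x + (real (card G) - 1) * (1 - c x) \<le> sum c G"
proof -
  have "Suc 0 \<le> card G" using assms(1,2) by (auto simp: Suc_le_eq card_gt_0_iff)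
  then have "(real (card G) - 1) * (1 - c x) = (\<Sum>y\<in>G - {x}. 1 - c x)"
    using assms(1,2) by (simp add: of_nat_diff)
  also have "\<dots> \<le> sum c (G - {x})"
  proof (rule sum_mono)
    fix y assume "y \<in> G - {x}"
    then show "1 - c x \<le> c y" using pw[of x y] assms(2) by auto
  qed
  finally show ?thesis using sum.remove[OF assms(1,2), of c] by simp
qed

lemma half_card_le_sum_of_pairwise_ge_1:
  fixes c :: "'b \<Rightarrow> real"
  assumes "finite G" "card G \<noteq> 1"
    and pw: "\<And>y z. y \<in> G \<Longrightarrow> z \<in> G \<Longrightarrow> y \<noteq> z \<Longrightarrow> 1 \<le> c y + c z"
  shows "real (card G) / 2 \<le> sum c G"
proof (cases "\<forall>x\<in>G. 1 / 2 \<le> c x")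
  case True
  then have "(\<Sum>x\<in>G. 1 / 2) \<le> sum c G" by (intro sum_mono) auto
  then show ?thesis by simp
next
  case False
  then obtain x where x: "x \<in> G" "c x < 1 / 2" by auto
  then have "2 \<le> card G" using assms(1,2) by (metis One_nat_def card_0_eq empty_iff less_2_cases not_le)
  then have "0 \<le> (real (card G) - 2) * (1 / 2 - c x)" using x by simp
  moreover have "c x + (real (card G) - 1) * (1 - c x) \<le> sum c G"
    using assms(1) x(1) pw by (rule sum_ge_of_pairwise_ge_1)
  ultimately show ?thesis by (simp add: algebra_simps)
qed

lemma half_card_plus_le_sum_of_pairwise_ge_1:
  fixes c :: "'b \<Rightarrow> real"
  assumes "finite G" "3 \<le> card G" "x \<in> G"
    and pw: "\<And>y z. y \<in> G \<Longrightarrow> z \<in> G \<Longrightarrow> y \<noteq> z \<Longrightarrow> 1 \<le> c y + c z"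
  shows "real (card G) / 2 + (1 / 2 - c x) \<le> sum c G"
proof (cases "1 / 2 \<le> c x")
  case True
  moreover have "real (card G) / 2 \<le> sum c G"
    using assms(1) _ pw by (rule half_card_le_sum_of_pairwise_ge_1) (use assms(2) in simp)
  ultimately show ?thesis by simp
next
  case False
  then have "0 \<le> (real (card G) - 3) * (1 / 2 - c x)" using assms(2) by simp
  moreover have "c x + (real (card G) - 1) * (1 - c x) \<le> sum c G"
    using assms(1,3) pw by (rule sum_ge_of_pairwise_ge_1)
  ultimately show ?thesis by (simp add: algebra_simps)
qed

lemma sum_remove_two:
  assumes "finite G" "a \<in> G" "b \<in> G" "a \<noteq> b"
  shows "sum c G = c a + c b + sum c (G - {a, b})"
proof -
  have "sum c G = c a + sum c (G - {a})" by (rule sum.remove[OF assms(1,2)])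
  also have "sum c (G - {a}) = c b + sum c (G - {a} - {b})"
    using assms by (intro sum.remove) auto
  also have "G - {a} - {b} = G - {a, b}" by auto
  finally show ?thesis by (simp add: add.assoc)
qed

lemma half_card_le_sum_by_classes:
  fixes c :: "'b \<Rightarrow> real" and f :: "'b \<Rightarrow> 'k"
  assumes "finite X"
    and classes: "\<And>x. x \<in> X \<Longrightarrow> card {y \<in> X. f y = f x} \<noteq> 1"
    and pw: "\<And>y z. y \<in> X \<Longrightarrow> z \<in> X \<Longrightarrow> y \<noteq> z \<Longrightarrow> f y = f z \<Longrightarrow> 1 \<le> c y + c z"
  shows "real (card X) / 2 \<le> sum c X"
proof -
  have "real (card X) / 2 = (\<Sum>k\<in>f ` X. real (card {x \<in> X. f x = k}) / 2)"
    using sum.image_gen[OF assms(1), of "\<lambda>_. 1 / 2 :: real" f] by simp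
  also have "\<dots> \<le> (\<Sum>k\<in>f ` X. sum c {x \<in> X. f x = k})"
    using assms by (intro sum_mono half_card_le_sum_of_pairwise_ge_1) auto
  also have "\<dots> = sum c X"
    using sum.image_gen[OF assms(1), of c f] by simp
  finally show ?thesis .
qed

section \<open>The leaf weighting\<close>

lemma frac_dim_le: "resolving_function V E g \<Longrightarrow> frac_dim V E \<le> sum g V"
  unfolding frac_dim_def resolving_function_def
  by (rule cInf_lower) (auto intro!: bdd_belowI[of _ 0] sum_nonneg)

lemma frac_dim1_le: "trunc_resolving_function V E h \<Longrightarrow> frac_dim1 V E \<le> sum h V"
  unfolding frac_dim1_def trunc_resolving_function_def
  by (rule cInf_lower) (auto intro!: bdd_belowI[of _ 0] sum_nonneg)

lemma le_frac_dim:
  "resolving_function V E g0 \<Longrightarrow> (\<And>g. resolving_function V E g \<Longrightarrow> c \<le> sum g V)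
    \<Longrightarrow> c \<le> frac_dim V E"
  unfolding frac_dim_def by (rule cInf_greatest) auto

lemma le_frac_dim1:
  "trunc_resolving_function V E h0 \<Longrightarrow> (\<And>h. trunc_resolving_function V E h \<Longrightarrow> c \<le> sum h V)
    \<Longrightarrow> c \<le> frac_dim1 V E"
  unfolding frac_dim1_def by (rule cInf_greatest) auto

context tree
begin

lemma sum_mono_within_V:
  fixes g :: "'a \<Rightarrow> real"
  assumes "\<forall>v\<in>V. 0 \<le> g v" "A \<subseteq> B" "B \<subseteq> V"
  shows "sum g A \<le> sum g B"
  using assms finite_subset[OF assms(3) finite_V] by (intro sum_mono2) auto

lemma resolving_function_sum_ge_1:
  assumes "resolving_function V E g" "x \<in> V" "y \<in> V" "x \<noteq> y"
    and "resolving_set V E x y \<subseteq> X" "X \<subseteq> V"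
  shows "1 \<le> sum g X"
proof -
  have "1 \<le> sum g (resolving_set V E x y)" using assms(1-4) by (simp add: resolving_function_def)
  also have "\<dots> \<le> sum g X"
    using assms(1,5,6) by (intro sum_mono_within_V) (auto simp: resolving_function_def)
  finally show ?thesis .
qed

lemma trunc_resolving_function_sum_ge_1:
  assumes "trunc_resolving_function V E h" "x \<in> V" "y \<in> V" "x \<noteq> y"
    and "resolving_set1 V E x y \<subseteq> X" "X \<subseteq> V"
  shows "1 \<le> sum h X"
proof -
  have "1 \<le> sum h (resolving_set1 V E x y)"
    using assms(1-4) by (simp add: trunc_resolving_function_def)
  also have "\<dots> \<le> sum h X"
    using assms(1,5,6) by (intro sum_mono_within_V) (auto simp: trunc_resolving_function_def)
  finally show ?thesis .
qed

lemma trunc_resolving_imp_resolving: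
  assumes "trunc_resolving_function V E h"
  shows "resolving_function V E h"
  unfolding resolving_function_def
proof (intro conjI ballI impI)
  fix x y assume "x \<in> V" "y \<in> V" "x \<noteq> y"
  then show "1 \<le> sum h (resolving_set V E x y)"
    using trunc_resolving_function_sum_ge_1[OF assms] resolving_set1_subset_resolving_set
    by (auto simp: resolving_set_def)
qed (use assms in \<open>auto simp: trunc_resolving_function_def\<close>)

lemma trunc_resolving_one: "trunc_resolving_function V E (\<lambda>_. 1)"
  unfolding trunc_resolving_function_def
proof (intro conjI ballI impI)
  fix x y assume "x \<in> V" "y \<in> V" "x \<noteq> y"
  then have "x \<in> resolving_set1 V E x y" by (simp add: resolving_set1_eq)
  moreover have "finite (resolving_set1 V E x y)" using finite_V by (simp add: resolving_set1_def)
  ultimately show "1 \<le> sum (\<lambda>_. 1 :: real) (resolving_set1 V E x y)"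
    by (simp add: Suc_le_eq card_gt_0_iff) blast
qed auto

lemma frac_dim_le_frac_dim1: "frac_dim V E \<le> frac_dim1 V E"
  using trunc_resolving_one
  by (rule le_frac_dim1) (intro frac_dim_le trunc_resolving_imp_resolving)

definition leaf_half :: "'a \<Rightarrow> real" where
  "leaf_half v = (if v \<in> L then 1 / 2 else 0)"

lemma sum_leaf_half: "finite R \<Longrightarrow> sum leaf_half R = card (R \<inter> L) / 2"
  unfolding leaf_half_def by (simp add: sum.If_cases Int_def)

lemma one_le_sum_leaf_half:
  assumes "finite R" "A \<subseteq> R \<inter> L" "2 \<le> card A"
  shows "1 \<le> sum leaf_half R"
proof -
  have "card A \<le> card (R \<inter> L)" using assms by (intro card_mono) auto
  then have "2 \<le> real (card (R \<inter> L))" using assms(3) by linarith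
  then show ?thesis using sum_leaf_half[OF assms(1)] by simp
qed

lemma resolving_leaf_half: "resolving_function V E leaf_half"
  unfolding resolving_function_def
proof (intro conjI ballI impI)
  fix x y assume xy: "x \<in> V" "y \<in> V" "x \<noteq> y"
  obtain l1 where l1: "l1 \<in> L" "gdist V E l1 x < gdist V E l1 y"
    using leaf_closer[OF xy] .
  obtain l2 where l2: "l2 \<in> L" "gdist V E l2 y < gdist V E l2 x"
    using leaf_closer[OF xy(2,1)] xy(3) by metis
  have "{l1, l2} \<subseteq> resolving_set V E x y \<inter> L"
    using l1 l2 leaves_subset_V by (auto simp: resolving_set_def gdist_sym)
  moreover have "l1 \<noteq> l2" using l1 l2 by auto
  ultimately show "1 \<le> sum leaf_half (resolving_set V E x y)"
    using finite_V by (intro one_le_sum_leaf_half[of _ "{l1, l2}"]) (auto simp: resolving_set_def)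
qed (auto simp: leaf_half_def)

lemma frac_dim_le_half_leaves: "frac_dim V E \<le> card L / 2"
  using frac_dim_le[OF resolving_leaf_half] sum_leaf_half[OF finite_V] leaves_subset_V
  by (simp add: Int_absorb1)

definition strongly_supported :: bool where
  "strongly_supported \<longleftrightarrow> (\<forall>w \<in> V - L. 2 \<le> card (leaf_nbrs w))"

lemma trunc_resolving_leaf_half:
  assumes strongly_supported
  shows "trunc_resolving_function V E leaf_half"
  unfolding trunc_resolving_function_def
proof (intro conjI ballI impI)
  fix x y assume xy: "x \<in> V" "y \<in> V" "x \<noteq> y"
  have fin: "finite (resolving_set1 V E x y)" using finite_V by (simp add: resolving_set1_def)
  have sym: "resolving_set1 V E y x = resolving_set1 V E x y"
    unfolding resolving_set1_def by auto
  consider "x \<in> L" "y \<in> L" | "x \<notin> L" | "y \<notin> L" by blast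
  then show "1 \<le> sum leaf_half (resolving_set1 V E x y)"
  proof cases
    case 1
    then show ?thesis using xy fin by (intro one_le_sum_leaf_half[of _ "{x, y}"]) (auto simp: resolving_set1_eq)
  next
    case 2
    then show ?thesis
      using xy fin assms leaf_nbrs_subset_resolving_set1[OF xy]
      by (intro one_le_sum_leaf_half[of _ "leaf_nbrs x"]) (auto simp: strongly_supported_def leaf_nbrs_def)
  next
    case 3
    then show ?thesis
      using xy fin assms leaf_nbrs_subset_resolving_set1[OF xy(2,1)] sym
      by (intro one_le_sum_leaf_half[of _ "leaf_nbrs y"]) (auto simp: strongly_supported_def leaf_nbrs_def)
  qed
qed (auto simp: leaf_half_def)

lemma frac_dim1_le_half_leaves: "strongly_supported \<Longrightarrow> frac_dim1 V E \<le> card L / 2"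
  using frac_dim1_le[OF trunc_resolving_leaf_half] sum_leaf_half[OF finite_V] leaves_subset_V
  by (simp add: Int_absorb1)

definition strong_leaves :: "'a set" where
  "strong_leaves = {l \<in> L. 2 \<le> card (leaf_nbrs (support l))}"

lemma half_card_strong_leaves_le_sum:
  fixes c :: "'a \<Rightarrow> real"
  assumes "\<And>l l'. l \<in> L \<Longrightarrow> l' \<in> L \<Longrightarrow> l \<noteq> l' \<Longrightarrow> support l = support l' \<Longrightarrow> 1 \<le> c l + c l'"
  shows "card strong_leaves / 2 \<le> sum c strong_leaves"
proof (rule half_card_le_sum_by_classes[where f = support])
  fix l assume "l \<in> strong_leaves"
  then have "{l' \<in> strong_leaves. support l' = support l} = leaf_nbrs (support l)"
    "2 \<le> card (leaf_nbrs (support l))"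
    by (auto simp: strong_leaves_def leaf_nbrs_eq)
  then show "card {l' \<in> strong_leaves. support l' = support l} \<noteq> 1" by simp
qed (use assms finite_leaves in \<open>auto simp: strong_leaves_def\<close>)

lemma strong_leaves_eq_leaves:
  assumes strongly_supported "3 \<le> card V"
  shows "strong_leaves = L"
  using assms support_in_V support_not_leaf by (auto simp: strong_leaves_def strongly_supported_def)

lemma half_leaves_le_frac_dim:
  assumes strongly_supported "2 \<le> card V"
  shows "card L / 2 \<le> frac_dim V E"
proof (rule le_frac_dim[OF trunc_resolving_imp_resolving[OF trunc_resolving_leaf_half[OF assms(1)]]])
  fix g assume g: "resolving_function V E g"
  then have nonneg: "\<forall>v\<in>V. 0 \<le> g v" by (simp add: resolving_function_def)
  show "card L / 2 \<le> sum g V"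
  proof (cases "card V = 2")
    case True \<comment> \<open>the two leaves of P_2 are not twins\<close>
    then obtain x y where xy: "x \<in> V" "y \<in> V" "x \<noteq> y" by (auto simp: card_2_iff)
    have "1 \<le> sum g V"
      by (rule resolving_function_sum_ge_1[OF g xy]) (auto simp: resolving_set_def)
    moreover have "card L \<le> card V" using leaves_subset_V finite_V by (rule card_mono[rotated])
    ultimately show ?thesis using True by simp
  next
    case False
    have "1 \<le> g l + g l'" if "l \<in> L" "l' \<in> L" "l \<noteq> l'" "support l = support l'" for l l'
      using resolving_function_sum_ge_1[OF g, of l l' "{l, l'}"] resolving_set_twin_leaves[OF that(1,2,4)]
        that leaves_subset_V by auto
    then have "card L / 2 \<le> sum g L"
      using half_card_strong_leaves_le_sum strong_leaves_eq_leaves assms False by fastforce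
    also have "\<dots> \<le> sum g V" using nonneg leaves_subset_V by (intro sum_mono_within_V) auto
    finally show ?thesis .
  qed
qed

lemma long_non_backtracking_walk_within:
  assumes "U \<noteq> {}" and deg: "\<And>u. u \<in> U \<Longrightarrow> 2 \<le> card {u' \<in> U. E u u'}"
  shows "\<exists>xs. length xs = Suc n \<and> set xs \<subseteq> U \<and> walk E xs \<and> non_backtracking xs"
proof (induction n)
  case 0
  obtain u where "u \<in> U" using assms(1) by blast
  then show ?case by (intro exI[of _ "[u]"]) (simp add: non_backtracking_def)
next
  case (Suc n)
  then obtain xs where xs: "length xs = Suc n" "set xs \<subseteq> U" "walk E xs" "non_backtracking xs"
    by blast
  then have "xs \<noteq> []" by auto
  then have "last xs \<in> U" using xs(2) last_in_set by blast
  define prev where "prev = (if 2 \<le> length xs then xs ! (length xs - 2) else last xs)"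
  have "\<not> {u' \<in> U. E (last xs) u'} \<subseteq> {prev}"
  proof
    assume "{u' \<in> U. E (last xs) u'} \<subseteq> {prev}"
    then have "card {u' \<in> U. E (last xs) u'} \<le> 1" using card_mono[of "{prev}"] by fastforce
    then show False using deg[OF \<open>last xs \<in> U\<close>] by simp
  qed
  then obtain u where u: "u \<in> U" "E (last xs) u" "u \<noteq> prev" by blast
  have "non_backtracking (xs @ [u])"
  proof (rule non_backtracking_append)
    show "non_backtracking [u]" by (simp add: non_backtracking_def)
    show "xs ! (length xs - 2) \<noteq> hd [u]" if "2 \<le> length xs"
      using u(3) that by (simp add: prev_def)
  qed (use xs(4) in simp_all)
  moreover have "walk E (xs @ [u])" using xs u by (auto simp: walk_append)
  ultimately show ?case using xs u by (intro exI[of _ "xs @ [u]"]) simp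
qed

lemma exists_few_nbrs_within:
  assumes "U \<subseteq> V" "U \<noteq> {}"
  shows "\<exists>u\<in>U. card {u' \<in> U. E u u'} < 2"
proof (rule ccontr)
  assume "\<not> ?thesis"
  then obtain xs where xs: "length xs = Suc (card V)" "set xs \<subseteq> U" "walk E xs" "non_backtracking xs"
    using long_non_backtracking_walk_within[OF assms(2)] by (meson not_less)
  then have "distinct xs" using assms(1) by (intro non_backtracking_walk_distinct) auto
  then have "card (set xs) = Suc (card V)" using xs(1) by (simp add: distinct_card)
  moreover have "card (set xs) \<le> card V" using xs(2) assms(1) finite_V by (intro card_mono) auto
  ultimately show False by simp
qed

lemma leaves_nonempty:
  assumes "2 \<le> card V"
  shows "L \<noteq> {}"
proof -
  obtain x y where "x \<in> V" "y \<in> V" "x \<noteq> y"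
    using assms by (metis card_le_Suc_iff numeral_2_eq_2 insertCI)
  then show ?thesis using leaf_closer by blast
qed

definition lone_leaves :: "'a set" where
  "lone_leaves = {l \<in> L. card (leaf_nbrs (support l)) = 1}"

definition lone_supports :: "'a set" where
  "lone_supports = support ` lone_leaves"

definition free_vertices :: "'a set" where
  "free_vertices = V - L - lone_supports"

lemma leaf_in_leaf_nbrs_support: "l \<in> L \<Longrightarrow> l \<in> leaf_nbrs (support l)"
  by (simp add: leaf_nbrs_eq)

lemma leaves_eq_strong_Un_lone: "L = strong_leaves \<union> lone_leaves"
proof -
  have "card (leaf_nbrs (support l)) \<noteq> 0" if "l \<in> L" for l
    using leaf_in_leaf_nbrs_support[OF that] finite_leaf_nbrs by (metis card_0_eq empty_iff)
  then show ?thesis by (force simp: strong_leaves_def lone_leaves_def)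
qed

lemma strong_Int_lone: "strong_leaves \<inter> lone_leaves = {}"
  by (auto simp: strong_leaves_def lone_leaves_def)

lemma leaf_nbrs_lone_support:
  assumes "l \<in> lone_leaves"
  shows "leaf_nbrs (support l) = {l}"
proof -
  have "l \<in> L" "card (leaf_nbrs (support l)) = 1" using assms by (auto simp: lone_leaves_def)
  then show ?thesis using leaf_in_leaf_nbrs_support[of l] by (metis card_1_singletonE singletonD)
qed

lemma inj_on_support_lone_leaves: "inj_on support lone_leaves"
  by (intro inj_onI) (metis leaf_nbrs_lone_support singleton_inject)

definition lone_support_nbrs :: "'a \<Rightarrow> 'a set" where
  "lone_support_nbrs w = {u \<in> lone_supports. E w u}"

lemma nbrs_lone_support:
  assumes "l \<in> lone_leaves" "E (support l) z"
  shows "z \<in> insert l (lone_support_nbrs (support l) \<union> free_vertices)"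
proof -
  have "z \<in> V" using assms(2) adjacent_in_V by blast
  moreover have "z \<in> L \<Longrightarrow> z = l"
    using leaf_nbrs_lone_support[OF assms(1)] assms(2) by (auto simp: leaf_nbrs_def)
  ultimately show ?thesis using assms(2) by (auto simp: lone_support_nbrs_def free_vertices_def)
qed

end

locale trunc_resolving_tree = tree +
  fixes h :: "'a \<Rightarrow> real"
  assumes trunc_resolving: "trunc_resolving_function V E h"
    and three_le_card: "3 \<le> card V"
begin

lemma h_nonneg: "v \<in> V \<Longrightarrow> 0 \<le> h v"
  using trunc_resolving by (simp add: trunc_resolving_function_def)

lemmas sum_ge_1 = trunc_resolving_function_sum_ge_1[OF trunc_resolving]

lemma support_internal: "l \<in> L \<Longrightarrow> support l \<in> V - L"
  using support_in_V support_not_leaf[OF three_le_card] by blast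

definition pendant_weight :: "'a \<Rightarrow> real" where
  "pendant_weight l = h l + h (support l)"

definition free_weight :: real where
  "free_weight = sum h free_vertices"

lemma free_weight_nonneg: "0 \<le> free_weight"
  unfolding free_weight_def using h_nonneg by (intro sum_nonneg) (auto simp: free_vertices_def)

lemma sum_V_split: "sum h V = sum h strong_leaves + sum pendant_weight lone_leaves + free_weight"
proof -
  have fin: "finite L" "finite (V - L)" using finite_leaves finite_V by auto
  have sub: "lone_supports \<subseteq> V - L"
    using support_internal by (auto simp: lone_supports_def lone_leaves_def)
  have "sum h V = sum h L + sum h (V - L)"
    using leaves_subset_V finite_V by (metis add.commute sum.subset_diff)
  moreover have "sum h L = sum h strong_leaves + sum h lone_leaves"
    using leaves_eq_strong_Un_lone strong_Int_lone fin(1)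
    by (metis finite_Un sum.union_disjoint)
  moreover have "sum h (V - L) = free_weight + sum h lone_supports"
    unfolding free_weight_def free_vertices_def using sum.subset_diff[OF sub fin(2)] by simp
  moreover have "sum h lone_supports = (\<Sum>l\<in>lone_leaves. h (support l))"
    unfolding lone_supports_def using inj_on_support_lone_leaves by (simp add: sum.reindex)
  ultimately show ?thesis by (simp add: pendant_weight_def sum.distrib)
qed

lemma half_card_strong_leaves_le_sum_h: "card strong_leaves / 2 \<le> sum h strong_leaves"
proof (rule half_card_strong_leaves_le_sum)
  fix l l' assume l: "l \<in> L" "l' \<in> L" "l \<noteq> l'" "support l = support l'"
  then have "resolving_set1 V E l l' \<subseteq> {l, l'}"
    using resolving_set1_subset_resolving_set resolving_set_twin_leaves by blast
  then show "1 \<le> h l + h l'" using sum_ge_1[of l l' "{l, l'}"] l leaves_subset_V by auto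
qed

lemma pendant_weight_pair:
  assumes l: "l \<in> lone_leaves" "l' \<in> lone_leaves" "l \<noteq> l'"
  shows "1 \<le> pendant_weight l + pendant_weight l'"
proof -
  have L: "l \<in> L" "l' \<in> L" using l by (auto simp: lone_leaves_def)
  have "support l \<noteq> support l'" using inj_on_support_lone_leaves l by (auto dest: inj_onD)
  moreover have "support l \<noteq> l" "support l \<noteq> l'" "support l' \<noteq> l" "support l' \<noteq> l'"
    using support_internal[OF L(1)] support_internal[OF L(2)] L by auto
  moreover have "resolving_set1 V E l l' \<subseteq> {l, l', support l, support l'}"
    using resolving_set1_leaf[of l l'] L leaves_subset_V l(3) leaf_adjacent_iff by auto
  then have "1 \<le> sum h {l, l', support l, support l'}"
    using sum_ge_1[of l l'] L leaves_subset_V support_in_V l(3) by auto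
  ultimately show ?thesis using L l(3) by (auto simp: pendant_weight_def)
qed

lemma one_le_sum_plus_free_weight:
  assumes "x \<in> V" "y \<in> V" "x \<noteq> y" "resolving_set1 V E x y \<subseteq> A \<union> free_vertices"
    and "A \<subseteq> V" "A \<inter> free_vertices = {}"
  shows "1 \<le> sum h A + free_weight"
proof -
  have fin: "finite A" "finite free_vertices"
    using assms(5) finite_V finite_subset by (auto simp: free_vertices_def)
  have "1 \<le> sum h (A \<union> free_vertices)"
    using sum_ge_1[OF assms(1-4)] assms(5) by (auto simp: free_vertices_def)
  also have "\<dots> = sum h A + free_weight"
    unfolding free_weight_def by (rule sum.union_disjoint[OF fin assms(6)])
  finally show ?thesis .
qed

lemma resolving_set1_lone_leaf_support:
  assumes "l \<in> lone_leaves"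
  shows "resolving_set1 V E l (support l) \<subseteq>
    {l, support l} \<union> lone_support_nbrs (support l) \<union> free_vertices"
proof -
  have "l \<in> L" using assms by (simp add: lone_leaves_def)
  then show ?thesis
    using resolving_set1_leaf[of l "support l"] support_in_V support_neq nbrs_lone_support[OF assms]
    by auto
qed

lemma pendant_weight_isolated:
  assumes "l \<in> lone_leaves" "lone_support_nbrs (support l) = {}"
  shows "1 \<le> pendant_weight l + free_weight"
proof -
  have "l \<in> L" using assms by (simp add: lone_leaves_def)
  then have V: "l \<in> V" "support l \<in> V" and "support l \<noteq> l"
    using leaves_subset_V support_in_V support_neq by auto
  have "support l \<notin> free_vertices" "l \<notin> free_vertices"
    using assms(1) \<open>l \<in> L\<close> by (auto simp: free_vertices_def lone_supports_def)
  then have "1 \<le> sum h {l, support l} + free_weight"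
    using resolving_set1_lone_leaf_support[OF assms(1)] assms(2) V \<open>support l \<noteq> l\<close>
    by (intro one_le_sum_plus_free_weight[of l "support l"]) auto
  then show ?thesis using \<open>support l \<noteq> l\<close> by (simp add: pendant_weight_def)
qed

lemma pendant_weight_pendant:
  assumes l: "l \<in> lone_leaves" "l' \<in> lone_leaves"
    and nbrs: "lone_support_nbrs (support l) = {support l'}"
  shows "2 \<le> 2 * pendant_weight l + pendant_weight l' + 2 * free_weight"
proof -
  have L: "l \<in> L" "l' \<in> L" using l by (auto simp: lone_leaves_def)
  have adj: "E (support l) (support l')" using nbrs by (auto simp: lone_support_nbrs_def)
  then have ne: "l \<noteq> l'" "support l \<noteq> support l'" by auto
  have internal: "support l \<notin> L" "support l' \<notin> L" using support_internal L by auto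
  then have ne': "support l \<noteq> l" "support l \<noteq> l'" "support l' \<noteq> l" "support l' \<noteq> l'"
    using L by auto
  have not_free: "l \<notin> free_vertices" "l' \<notin> free_vertices"
    "support l \<notin> free_vertices" "support l' \<notin> free_vertices"
    using l L by (auto simp: free_vertices_def lone_supports_def)
  have V: "l \<in> V" "l' \<in> V" "support l \<in> V" "support l' \<in> V"
    using L leaves_subset_V support_in_V by auto
  have "1 \<le> sum h {l, support l, support l'} + free_weight"
    using resolving_set1_lone_leaf_support[OF l(1)] nbrs internal L not_free V
    by (intro one_le_sum_plus_free_weight[of l "support l"]) auto
  moreover have "resolving_set1 V E l' (support l) \<subseteq> {l', support l, l} \<union> free_vertices"
  proof
    fix z assume "z \<in> resolving_set1 V E l' (support l)"
    then have "z \<in> {l', support l} \<or> (z \<noteq> support l' \<and> E (support l) z)"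
      using resolving_set1_leaf[of l' "support l"] L V adj internal by auto
    then show "z \<in> {l', support l, l} \<union> free_vertices"
      using nbrs_lone_support[OF l(1), of z] nbrs by auto
  qed
  then have "1 \<le> sum h {l', support l, l} + free_weight"
    using internal L not_free V by (intro one_le_sum_plus_free_weight[of l' "support l"]) auto
  ultimately show ?thesis using ne ne' by (simp add: pendant_weight_def insert_commute)
qed

lemma leaf_plus_internal_ge_1:
  assumes "w \<in> V - L" "leaf_nbrs w = {}" "l \<in> L"
  shows "1 \<le> h l + sum h (V - L)"
proof -
  have "resolving_set1 V E l w \<subseteq> insert l (V - L)"
    using resolving_set1_leaf[of l w] assms support_internal by (auto simp: leaf_nbrs_def)
  then have "1 \<le> sum h (insert l (V - L))"
    using sum_ge_1[of l w] assms leaves_subset_V by auto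
  then show ?thesis using assms(3) finite_V by simp
qed

lemma sum_ge_half_leaves_plus_half_if_no_lone_leaves:
  assumes "\<not> strongly_supported" "lone_leaves = {}"
  shows "card L / 2 + 1 / 2 \<le> sum h V"
proof -
  obtain w where w: "w \<in> V - L" "card (leaf_nbrs w) < 2"
    using assms(1) by (auto simp: strongly_supported_def not_le)
  have "leaf_nbrs w = {}"
  proof (rule ccontr)
    assume "leaf_nbrs w \<noteq> {}"
    then have "card (leaf_nbrs w) = 1" using w(2) finite_leaf_nbrs by (simp add: less_2_cases_iff)
    then obtain l where l: "leaf_nbrs w = {l}" by (rule card_1_singletonE)
    then have "l \<in> L" "support l = w" by (auto simp: leaf_nbrs_eq)
    with l have "l \<in> lone_leaves" by (simp add: lone_leaves_def)
    then show False using assms(2) by simp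
  qed
  have strong: "strong_leaves = L" using assms(2) leaves_eq_strong_Un_lone by simp
  have split: "sum h V = sum h L + free_weight" using sum_V_split assms(2) strong by simp
  have "free_weight = sum h (V - L)"
    using assms(2) by (simp add: free_weight_def free_vertices_def lone_supports_def)
  then have leaf_bound: "1 - free_weight \<le> h l" if "l \<in> L" for l
    using leaf_plus_internal_ge_1[OF w(1) \<open>leaf_nbrs w = {}\<close> that] by simp
  show ?thesis
  proof (cases "1 / 2 \<le> free_weight")
    case True
    then show ?thesis using half_card_strong_leaves_le_sum_h strong split by simp
  next
    case False
    have "real (card L) * (1 - free_weight) \<le> sum h L"
      using sum_mono[of L "\<lambda>_. 1 - free_weight" h] leaf_bound by simp
    moreover have "1 \<le> card L"
      using leaves_nonempty three_le_card finite_leaves by (simp add: Suc_le_eq card_gt_0_iff)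
    then have "0 \<le> (real (card L) - 1) * (1 / 2 - free_weight)" using False by simp
    ultimately show ?thesis using split by (simp add: algebra_simps)
  qed
qed

lemma lone_leaves_bound_isolated:
  assumes l: "l \<in> lone_leaves" and isolated: "lone_support_nbrs (support l) = {}"
  shows "card lone_leaves / 2 + 1 / 2 \<le> sum pendant_weight lone_leaves + free_weight"
proof -
  have fin: "finite lone_leaves" using finite_leaves by (simp add: lone_leaves_def)
  have first: "1 \<le> pendant_weight l + free_weight" by (rule pendant_weight_isolated[OF assms])
  show ?thesis
  proof (cases "card lone_leaves = 2")
    case True
    then have "card (lone_leaves - {l}) = 1" using l fin by simp
    then obtain l' where "lone_leaves - {l} = {l'}" by (rule card_1_singletonE)
    then have l': "lone_leaves = {l, l'}" "l' \<noteq> l" using l by auto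
    have "lone_support_nbrs (support l') = {}"
    proof (rule ccontr)
      assume "lone_support_nbrs (support l') \<noteq> {}"
      then obtain u where "u \<in> lone_supports" "E (support l') u"
        by (auto simp: lone_support_nbrs_def)
      then have "u = support l"
        using l' by (auto simp: lone_supports_def)
      then have "E (support l) (support l')"
        using adjacent_sym \<open>E (support l') u\<close> by blast
      then have "support l' \<in> lone_support_nbrs (support l)"
        using l' by (simp add: lone_support_nbrs_def lone_supports_def)
      then show False using isolated by simp
    qed
    then have "1 \<le> pendant_weight l' + free_weight"
      using l' by (intro pendant_weight_isolated) auto
    moreover have "1 \<le> pendant_weight l + pendant_weight l'"
      using l' by (intro pendant_weight_pair) auto
    ultimately show ?thesis using first l' True by simp
  next
    case False
    then have "card (lone_leaves - {l}) \<noteq> 1" using l fin by simp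
    then have "card (lone_leaves - {l}) / 2 \<le> sum pendant_weight (lone_leaves - {l})"
      using fin pendant_weight_pair by (intro half_card_le_sum_of_pairwise_ge_1) auto
    then show ?thesis
      using first sum.remove[OF fin l, of pendant_weight] l fin by (simp add: of_nat_diff)
  qed
qed

lemma lone_leaves_bound_pendant_two:
  assumes two: "lone_leaves = {l, l'}" "l \<noteq> l'"
    and pendant: "lone_support_nbrs (support l) = {support l'}"
  shows "card lone_leaves / 2 + 1 / 6 \<le> sum pendant_weight lone_leaves + free_weight"
proof -
  have l: "l \<in> lone_leaves" "l' \<in> lone_leaves" using two by auto
  have "E (support l) (support l')" using pendant by (auto simp: lone_support_nbrs_def)
  then have "E (support l') (support l)" by (rule adjacent_sym)
  then have "lone_support_nbrs (support l') = {support l}"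
    using two by (auto simp: lone_support_nbrs_def lone_supports_def)
  then have "2 \<le> 2 * pendant_weight l' + pendant_weight l + 2 * free_weight"
    by (rule pendant_weight_pendant[OF l(2,1)])
  moreover have "2 \<le> 2 * pendant_weight l + pendant_weight l' + 2 * free_weight"
    by (rule pendant_weight_pendant[OF l pendant])
  moreover have "1 \<le> pendant_weight l + pendant_weight l'"
    by (rule pendant_weight_pair[OF l two(2)])
  ultimately show ?thesis using two by simp
qed

text \<open>Only this case, with at least three lone leaves, limits the surplus to 1/6.\<close>
lemma lone_leaves_bound_pendant:
  assumes l: "l \<in> lone_leaves" "l' \<in> lone_leaves"
    and pendant: "lone_support_nbrs (support l) = {support l'}"
  shows "card lone_leaves / 2 + 1 / 6 \<le> sum pendant_weight lone_leaves + free_weight"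
proof -
  have fin: "finite lone_leaves" using finite_leaves by (simp add: lone_leaves_def)
  have "E (support l) (support l')" using pendant by (auto simp: lone_support_nbrs_def)
  then have "l \<noteq> l'" by auto
  have K: "2 \<le> 2 * pendant_weight l + pendant_weight l' + 2 * free_weight"
    by (rule pendant_weight_pendant[OF l pendant])
  have pair: "\<And>x y. x \<in> lone_leaves \<Longrightarrow> y \<in> lone_leaves \<Longrightarrow> x \<noteq> y
      \<Longrightarrow> 1 \<le> pendant_weight x + pendant_weight y"
    by (rule pendant_weight_pair)
  define rest where "rest = lone_leaves - {l, l'}"
  have sum_split: "sum pendant_weight lone_leaves
      = pendant_weight l + pendant_weight l' + sum pendant_weight rest"
    unfolding rest_def by (rule sum_remove_two[OF fin l \<open>l \<noteq> l'\<close>])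
  have card_rest: "card rest = card lone_leaves - 2"
    unfolding rest_def using l \<open>l \<noteq> l'\<close> by (simp add: card_Diff_subset)
  have "2 \<le> card lone_leaves" using card_mono[OF fin, of "{l, l'}"] l \<open>l \<noteq> l'\<close> by simp
  then consider "card lone_leaves = 2" | "card lone_leaves = 3" | "4 \<le> card lone_leaves"
    by linarith
  then show ?thesis
  proof cases
    case 1
    then have "lone_leaves = {l, l'}" using card_rest fin l by (auto simp: rest_def)
    then show ?thesis using lone_leaves_bound_pendant_two \<open>l \<noteq> l'\<close> pendant by blast
  next
    case 2
    then obtain q where "rest = {q}" using card_rest by (auto simp: card_1_singleton_iff)
    then have "q \<in> lone_leaves" "q \<noteq> l" "q \<noteq> l'" "sum pendant_weight rest = pendant_weight q"
      by (auto simp: rest_def)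
    then show ?thesis
      using K pair[of q l] pair[of q l'] l sum_split 2 free_weight_nonneg by simp
  next
    case 3
    have "card rest / 2 \<le> sum pendant_weight rest"
    proof (rule half_card_le_sum_of_pairwise_ge_1)
      show "finite rest" "card rest \<noteq> 1" using fin card_rest 3 by (simp_all add: rest_def)
    qed (use pair in \<open>simp add: rest_def\<close>)
    moreover have "card lone_leaves / 2 + (1 / 2 - pendant_weight l') \<le> sum pendant_weight lone_leaves"
      using fin _ l(2) pair by (rule half_card_plus_le_sum_of_pairwise_ge_1) (use 3 in simp)
    ultimately show ?thesis
      using K sum_split card_rest 3 free_weight_nonneg by (simp add: of_nat_diff)
  qed
qed

lemma lone_leaves_bound:
  assumes "lone_leaves \<noteq> {}"
  shows "card lone_leaves / 2 + 1 / 6 \<le> sum pendant_weight lone_leaves + free_weight"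
proof -
  have "lone_supports \<subseteq> V" using support_in_V by (auto simp: lone_supports_def lone_leaves_def)
  moreover have "lone_supports \<noteq> {}" using assms by (simp add: lone_supports_def)
  ultimately obtain u where u: "u \<in> lone_supports" "card {u' \<in> lone_supports. E u u'} < 2"
    using exists_few_nbrs_within by blast
  then obtain l where l: "l \<in> lone_leaves" and "u = support l"
    by (auto simp: lone_supports_def)
  then have few: "card (lone_support_nbrs (support l)) < 2"
    using u by (simp add: lone_support_nbrs_def)
  have "finite (lone_support_nbrs (support l))"
    using finite_leaves by (simp add: lone_support_nbrs_def lone_supports_def lone_leaves_def)
  moreover have "card (lone_support_nbrs (support l)) = 0 \<or> card (lone_support_nbrs (support l)) = 1"
    using few by linarith
  ultimately consider "lone_support_nbrs (support l) = {}" | p where "lone_support_nbrs (support l) = {p}"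
    using card_1_singletonE by auto
  then show ?thesis
  proof cases
    case 1
    then show ?thesis using lone_leaves_bound_isolated[OF l] by simp
  next
    case (2 p)
    then obtain l' where "l' \<in> lone_leaves" "p = support l'"
      by (auto simp: lone_support_nbrs_def lone_supports_def)
    then show ?thesis using lone_leaves_bound_pendant[OF l] 2 by simp
  qed
qed

lemma sum_ge_half_leaves_plus_sixth:
  assumes "\<not> strongly_supported"
  shows "card L / 2 + 1 / 6 \<le> sum h V"
proof (cases "lone_leaves = {}")
  case True
  then show ?thesis using sum_ge_half_leaves_plus_half_if_no_lone_leaves[OF assms] by simp
next
  case False
  have "card L = card strong_leaves + card lone_leaves"
    using leaves_eq_strong_Un_lone strong_Int_lone finite_leaves
    by (metis card_Un_disjoint finite_Un)
  then have "real (card L) = real (card strong_leaves) + real (card lone_leaves)" by simp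
  then show ?thesis
    using sum_V_split half_card_strong_leaves_le_sum_h lone_leaves_bound[OF False] by linarith
qed

end

section \<open>Strongly supported trees\<close>

lemma is_path_graph_of_list:
  assumes "distinct xs" "set xs = V"
    and "\<And>i j. i < length xs \<Longrightarrow> j < length xs \<Longrightarrow> E (xs ! i) (xs ! j) \<longleftrightarrow> (i = Suc j \<or> j = Suc i)"
  shows "is_path_graph V E (length xs)"
proof -
  have "bij_betw ((!) xs) {0..<length xs} V" using assms(1,2) by (intro bij_betw_nth) auto
  then show ?thesis using assms(3) unfolding is_path_graph_def by blast
qed

lemma card_eq_if_path_graph: "is_path_graph V E n \<Longrightarrow> card V = n"
  unfolding is_path_graph_def by (metis bij_betw_same_card card_atLeastLessThan diff_zero)

context tree
begin

lemma card_eq_2_imp_leaf: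
  assumes "card V = 2" "v \<in> V"
  shows "v \<in> L"
proof -
  obtain w where w: "V = {v, w}" "w \<noteq> v"
    using assms by (auto simp: card_2_iff doubleton_eq_iff)
  then obtain d where "E v d" using closer_neighbour[of w v] by blast
  then have "{u \<in> V. E v u} = {w}" using w adjacent_in_V[of v] by fastforce
  then show ?thesis using assms(2) by (simp add: leaves_def degree_def)
qed

lemma card_eq_2_imp_strongly_supported:
  assumes "card V = 2"
  shows strongly_supported
  using card_eq_2_imp_leaf[OF assms] by (auto simp: strongly_supported_def)

lemma leaf_nbrs_subset_terminal_vertices: "leaf_nbrs w \<subseteq> terminal_vertices V E w"
proof
  fix l assume "l \<in> leaf_nbrs w"
  then have l: "l \<in> L" "support l = w" by (auto simp: leaf_nbrs_eq)
  then have lV: "l \<in> V" "w \<in> V" using leaves_subset_V support_in_V by auto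
  have "gdist V E l w < gdist V E l u" if "major V E u" "u \<noteq> w" for u
  proof -
    have "u \<in> V" "u \<noteq> l" using that l by (auto simp: major_def leaves_def)
    moreover have "\<not> E l u" using that l leaf_adjacent_iff by blast
    ultimately have "gdist V E l u \<noteq> 0" "gdist V E l u \<noteq> 1"
      using gdist_eq_0_iff gdist_eq_1_iff lV by auto
    moreover have "gdist V E l w = 1" using gdist_eq_1_iff lV l leaf_adjacent_iff by blast
    ultimately show ?thesis by linarith
  qed
  then show "l \<in> terminal_vertices V E w" using l by (simp add: terminal_vertices_def)
qed

lemma terminal_vertex_in_leaf_nbrs:
  assumes "major V E w" "l \<in> terminal_vertices V E w" "major V E (support l)"
  shows "l \<in> leaf_nbrs w"
proof -
  have l: "l \<in> L" using assms(2) by (simp add: terminal_vertices_def)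
  have "support l = w"
  proof (rule ccontr)
    assume "support l \<noteq> w"
    then have "gdist V E l w < gdist V E l (support l)"
      using assms by (simp add: terminal_vertices_def)
    moreover have "gdist V E l (support l) = 1"
      using gdist_eq_1_iff l leaves_subset_V support_in_V leaf_adjacent_iff by blast
    ultimately have "l = w"
      using gdist_eq_0_iff l leaves_subset_V assms(1) by (auto simp: major_def)
    then show False using assms(1) l by (simp add: major_def leaves_def)
  qed
  then show ?thesis using l by (simp add: leaf_nbrs_eq)
qed

lemma path_graph_3_imp_strongly_supported:
  assumes "is_path_graph V E 3"
  shows strongly_supported
proof -
  obtain f where bij: "bij_betw f {0..<3} V"
    and adj: "\<And>i j. i < 3 \<Longrightarrow> j < 3 \<Longrightarrow> E (f i) (f j) \<longleftrightarrow> (i = Suc j \<or> j = Suc i)"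
    using assms unfolding is_path_graph_def by blast
  have "{0..<3 :: nat} = {0, 1, 2}" by auto
  then have V: "V = {f 0, f 1, f 2}" using bij by (auto simp: bij_betw_def)
  have "f 0 \<noteq> f 2" using inj_onD[OF bij_betw_imp_inj_on[OF bij], of 0 2] by auto
  have edges: "E (f 0) (f 1)" "\<not> E (f 0) (f 2)" "E (f 2) (f 1)" "\<not> E (f 2) (f 0)"
    "E (f 1) (f 0)" "E (f 1) (f 2)"
    using adj[of 0 1] adj[of 0 2] adj[of 2 1] adj[of 2 0] adj[of 1 0] adj[of 1 2] by simp_all
  then have "{u \<in> V. E (f 0) u} = {f 1}" "{u \<in> V. E (f 2) u} = {f 1}"
    unfolding V by auto
  then have "f 0 \<in> L" "f 2 \<in> L" unfolding leaves_def degree_def using V by auto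
  moreover note edges
  ultimately have "{f 0, f 2} \<subseteq> leaf_nbrs (f 1)" by (simp add: leaf_nbrs_def)
  then have "card {f 0, f 2} \<le> card (leaf_nbrs (f 1))" by (rule card_mono[OF finite_leaf_nbrs])
  then have "2 \<le> card (leaf_nbrs (f 1))" using \<open>f 0 \<noteq> f 2\<close> by simp
  moreover have "V - L \<subseteq> {f 1}" using V \<open>f 0 \<in> L\<close> \<open>f 2 \<in> L\<close> by blast
  ultimately show ?thesis by (auto simp: strongly_supported_def)
qed

lemma M2_cover_imp_strongly_supported:
  assumes cover: "V = M2 V E \<union> L"
  shows strongly_supported
  unfolding strongly_supported_def
proof
  fix w assume w: "w \<in> V - L"
  then have "w \<in> M2 V E" using cover by blast
  then have major: "major V E w" and ter: "2 \<le> ter V E w"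
    by (auto simp: M2_def exterior_major_def)
  have "terminal_vertices V E w \<subseteq> leaf_nbrs w"
  proof
    fix l assume l: "l \<in> terminal_vertices V E w"
    then have "l \<in> L" by (simp add: terminal_vertices_def)
    then have "support l \<notin> L" using leaf_support_leaf w by blast
    then have "support l \<in> M2 V E" using cover support_in_V \<open>l \<in> L\<close> by blast
    then have "major V E (support l)" by (simp add: M2_def exterior_major_def)
    then show "l \<in> leaf_nbrs w" by (rule terminal_vertex_in_leaf_nbrs[OF major l])
  qed
  then have "ter V E w \<le> card (leaf_nbrs w)"
    unfolding ter_def using finite_leaf_nbrs by (rule card_mono[rotated])
  then show "2 \<le> card (leaf_nbrs w)" using ter by simp
qed

lemma card_eq_2_imp_path_graph_2:
  assumes "card V = 2"
  shows "is_path_graph V E 2"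
proof -
  obtain x y where xy: "V = {x, y}" "x \<noteq> y" using assms by (auto simp: card_2_iff)
  then have "E x y" using card_eq_2_imp_leaf[OF assms] leaf_adjacent_iff support_in_V support_neq
    by (metis insertCI insertE singletonD)
  then have "is_path_graph V E (length [x, y])"
    using xy adjacent_sym[OF \<open>E x y\<close>] by (intro is_path_graph_of_list) (auto simp: less_Suc_eq)
  then show ?thesis by (simp add: numeral_2_eq_2)
qed

lemma degree_2_imp_path_graph_3:
  assumes strongly_supported "w \<in> V - L" "degree V E w = 2"
  shows "is_path_graph V E 3"
proof -
  have "leaf_nbrs w \<subseteq> {u \<in> V. E w u}" using leaves_subset_V by (auto simp: leaf_nbrs_def)
  moreover have "card {u \<in> V. E w u} \<le> card (leaf_nbrs w)"
    using assms by (simp add: strongly_supported_def degree_def)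
  ultimately have "leaf_nbrs w = {u \<in> V. E w u}"
    using finite_V by (intro card_seteq) auto
  then have nbrs: "{u \<in> V. E w u} = leaf_nbrs w" by simp
  with assms(3) obtain l1 l2 where l: "leaf_nbrs w = {l1, l2}" "l1 \<noteq> l2"
    by (auto simp: degree_def card_2_iff)
  then have L: "l1 \<in> L" "l2 \<in> L" "support l1 = w" "support l2 = w"
    by (auto simp: leaf_nbrs_eq)
  have "{l1, w, l2} = V"
  proof (rule closed_subset_eq_V)
    fix x y assume "x \<in> {l1, w, l2}" "E x y"
    then show "y \<in> {l1, w, l2}"
      using L nbrs l leaf_adjacent_iff adjacent_in_V[of x y] by auto
  qed (use assms(2) L leaves_subset_V in auto)
  moreover have "w \<noteq> l1" "w \<noteq> l2" using assms(2) L by auto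
  ultimately have "is_path_graph V E (length [l1, w, l2])"
    using l L leaf_adjacent_iff adjacent_leaf_iff
    by (intro is_path_graph_of_list) (auto simp: less_Suc_eq)
  then show ?thesis by (simp add: numeral_3_eq_3)
qed

lemma no_degree_2_imp_M2_cover:
  assumes strongly_supported "3 \<le> card V" "\<forall>w\<in>V - L. degree V E w \<noteq> 2"
  shows "1 \<le> ex_num V E \<and> V = M2 V E \<union> L"
proof -
  have internal_M2: "w \<in> M2 V E" if w: "w \<in> V - L" for w
  proof -
    have "leaf_nbrs w \<subseteq> {u \<in> V. E w u}" using leaves_subset_V by (auto simp: leaf_nbrs_def)
    then have "card (leaf_nbrs w) \<le> degree V E w"
      unfolding degree_def using finite_V by (intro card_mono) auto
    then have "major V E w" using assms w by (force simp: strongly_supported_def major_def)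
    moreover have "card (leaf_nbrs w) \<le> ter V E w"
      unfolding ter_def using leaf_nbrs_subset_terminal_vertices finite_leaves
      by (intro card_mono) (auto simp: terminal_vertices_def)
    ultimately show ?thesis using assms(1) w by (force simp: strongly_supported_def M2_def exterior_major_def)
  qed
  have "V = M2 V E \<union> L"
    using internal_M2 leaves_subset_V by (auto simp: M2_def exterior_major_def major_def)
  moreover obtain l where "l \<in> L" using leaves_nonempty assms(2) by fastforce
  then have "support l \<in> exterior_major V E"
    using internal_M2 support_in_V support_not_leaf[OF assms(2)] by (auto simp: M2_def)
  moreover have "finite (exterior_major V E)"
    using finite_V by (rule finite_subset[rotated]) (auto simp: exterior_major_def major_def)
  ultimately show ?thesis by (auto simp: ex_num_def Suc_le_eq card_gt_0_iff)
qed

lemma strongly_supported_iff: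
  assumes "2 \<le> card V"
  shows "strongly_supported \<longleftrightarrow>
    is_path_graph V E 2 \<or> is_path_graph V E 3 \<or> (1 \<le> ex_num V E \<and> V = M2 V E \<union> L)"
proof
  assume strong: strongly_supported
  consider "card V = 2" | "\<exists>w\<in>V - L. degree V E w = 2" | "3 \<le> card V" "\<forall>w\<in>V - L. degree V E w \<noteq> 2"
    using assms by force
  then show "is_path_graph V E 2 \<or> is_path_graph V E 3 \<or> (1 \<le> ex_num V E \<and> V = M2 V E \<union> L)"
    by cases (use card_eq_2_imp_path_graph_2 degree_2_imp_path_graph_3[OF strong]
        no_degree_2_imp_M2_cover[OF strong] in blast)+
next
  assume "is_path_graph V E 2 \<or> is_path_graph V E 3 \<or> (1 \<le> ex_num V E \<and> V = M2 V E \<union> L)"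
  then show strongly_supported
    using card_eq_if_path_graph card_eq_2_imp_strongly_supported
      path_graph_3_imp_strongly_supported M2_cover_imp_strongly_supported by blast
qed

lemma half_leaves_plus_sixth_le_frac_dim1:
  assumes "\<not> strongly_supported" "2 \<le> card V"
  shows "card L / 2 + 1 / 6 \<le> frac_dim1 V E"
proof (rule le_frac_dim1[OF trunc_resolving_one])
  have "3 \<le> card V" using assms card_eq_2_imp_strongly_supported by fastforce
  fix h assume "trunc_resolving_function V E h"
  then interpret trunc_resolving_tree V E h
    using \<open>3 \<le> card V\<close> by unfold_locales
  show "card L / 2 + 1 / 6 \<le> sum h V" by (rule sum_ge_half_leaves_plus_sixth[OF assms(1)])
qed

lemma frac_dim1_eq_frac_dim_iff:
  assumes "2 \<le> card V"
  shows "frac_dim1 V E = frac_dim V E \<longleftrightarrow> strongly_supported"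
proof
  assume eq: "frac_dim1 V E = frac_dim V E"
  show strongly_supported
  proof (rule ccontr)
    assume "\<not> strongly_supported"
    then show False using half_leaves_plus_sixth_le_frac_dim1[OF _ assms] frac_dim_le_half_leaves eq by fastforce
  qed
next
  assume strongly_supported
  then show "frac_dim1 V E = frac_dim V E"
    using frac_dim1_le_half_leaves half_leaves_le_frac_dim[OF _ assms] frac_dim_le_frac_dim1 by fastforce
qed

end

theorem proposition3p16:
  fixes V :: "'a set" and E :: "'a \<Rightarrow> 'a \<Rightarrow> bool"
  assumes "is_tree V E" and "card V \<ge> 2"
  shows "frac_dim1 V E = frac_dim V E \<longleftrightarrow>
           (is_path_graph V E 2 \<or> is_path_graph V E 3 \<or>
            (ex_num V E \<ge> 1 \<and> V = M2 V E \<union> leaves V E))"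
proof -
  interpret tree V E by (rule tree.intro) (rule assms(1))
  show ?thesis using frac_dim1_eq_frac_dim_iff strongly_supported_iff assms(2) by simp
qed

end
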